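(* Let $\Omega$ be the first uncountable ordinal, $[0,\Omega]$ with the order topology, and $X:=[0,\Omega]^2$. Let $Y:=X\times\{\bullet,\uparrow,\downarrow\}/\!\sim$, where $\sim$ identifies all three points $(\Omega,\Omega,t)$, identifies $(\Omega,\alpha,\bullet)$ with $(\Omega,\alpha,\uparrow)$ for all $\alpha\in[0,\Omega]$, and identifies $(\alpha,\Omega,\bullet)$ with $(\alpha,\Omega,\downarrow)$ for all $\alpha\in[0,\Omega]$; let $\pi:Y\to X$ be induced by the first projection. Then $\pi$ is a branched cover with fibers of cardinality $1$ at $(\Omega,\Omega)$, $2$ on $X_2:=\{\Omega\}\times[0,\Omega)\sqcup[0,\Omega)\times\{\Omega\}$, and $3$ on $[0,\Omega)^2$, and all three strata are normal spaces. Moreover, let $\mu_x$ be the uniform probability measure on the two-point fiber $\pi^{-1}(x)$ for $x\in X_2$ and the point mass for $x=(\Omega,\Omega)$. Then there is no weak$^*$-continuous family $x\mapsto\mu_x$, $x\in X$, of probability measures $\mu_x$ on $\pi^{-1}(x)$ (viewed in $C(Y)^*$) extending this family such that $\mu_x$ gives positive mass to every point of $\pi^{-1}(x)$ for all $x\in[0,\Omega)^2$.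
   Context: A branched cover is a continuous open surjection of compact Hausdorff spaces with uniformly bounded finite fibers. A weak$^*$-continuous family of probability measures $\mu_x$ on $\pi^{-1}(x)$ means $x\mapsto\int f\,d\mu_x$ is continuous on $X$ for every $f\in C(Y)$; such families correspond to conditional expectations $C(Y)\to C(X)$. *)

theory Defs
  imports "HOL-Analysis.Analysis"
begin

definition quot_topology :: "'a topology \<Rightarrow> ('a \<Rightarrow> 'b) \<Rightarrow> 'b topology" where
  "quot_topology T q = topology (\<lambda>U. U \<subseteq> q ` topspace T \<and> openin T {p \<in> topspace T. q p \<in> U})"

definition branched_cover :: "'y topology \<Rightarrow> 'x topology \<Rightarrow> ('y \<Rightarrow> 'x) \<Rightarrow> bool" where
  "branched_cover Ytop Xtop \<pi> \<longleftrightarrow>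
     compact_space Ytop \<and> Hausdorff_space Ytop \<and>
     compact_space Xtop \<and> Hausdorff_space Xtop \<and>
     continuous_map Ytop Xtop \<pi> \<and> open_map Ytop Xtop \<pi> \<and>
     \<pi> ` topspace Ytop = topspace Xtop \<and>
     (\<exists>N::nat. \<forall>x\<in>topspace Xtop.
        finite {y \<in> topspace Ytop. \<pi> y = x} \<and> card {y \<in> topspace Ytop. \<pi> y = x} \<le> N)"

definition fiber :: "'y topology \<Rightarrow> ('y \<Rightarrow> 'x) \<Rightarrow> 'x \<Rightarrow> 'y set" where
  "fiber Ytop \<pi> x = {y \<in> topspace Ytop. \<pi> y = x}"

text \<open>A family of probability measures on the (finite) fibers, represented by point masses:
  \<open>\<mu> x y\<close> is the mass of the point \<open>y\<close> for the measure \<open>\<mu>_x\<close>.\<close>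
definition prob_family :: "'y topology \<Rightarrow> 'x topology \<Rightarrow> ('y \<Rightarrow> 'x) \<Rightarrow> ('x \<Rightarrow> 'y \<Rightarrow> real) \<Rightarrow> bool" where
  "prob_family Ytop Xtop \<pi> \<mu> \<longleftrightarrow>
     (\<forall>x\<in>topspace Xtop. (\<forall>y. \<mu> x y \<ge> 0) \<and> (\<forall>y. y \<notin> fiber Ytop \<pi> x \<longrightarrow> \<mu> x y = 0)
        \<and> (\<Sum>y\<in>fiber Ytop \<pi> x. \<mu> x y) = 1)"

definition weak_star_continuous :: "'y topology \<Rightarrow> 'x topology \<Rightarrow> ('y \<Rightarrow> 'x) \<Rightarrow> ('x \<Rightarrow> 'y \<Rightarrow> real) \<Rightarrow> bool" where
  "weak_star_continuous Ytop Xtop \<pi> \<mu> \<longleftrightarrow>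
     (\<forall>f. continuous_map Ytop euclideanreal f \<longrightarrow>
        continuous_map Xtop euclideanreal (\<lambda>x. \<Sum>y\<in>fiber Ytop \<pi> x. \<mu> x y * f y))"

datatype sheet = Dot | Up | Down

text \<open>The space \<open>[0,\<Omega>]\<close> is represented by a well-ordered type carrying the order topology,
  with a greatest element \<open>\<Omega>\<close> having uncountably many predecessors while every
  \<open>\<alpha> < \<Omega>\<close> has only countably many predecessors; this pins down the order type
  \<open>\<omega>\<^sub>1 + 1\<close>.\<close>
definition is_first_uncountable_top :: "'a::{wellorder,linorder_topology} \<Rightarrow> bool" where
  "is_first_uncountable_top \<Omega> \<longleftrightarrow>
     (\<forall>x. x \<le> \<Omega>) \<and> uncountable {x. x < \<Omega>} \<and> (\<forall>a<\<Omega>. countable {x. x < a})"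

definition Xtop :: "('a::topological_space \<times> 'a) topology" where
  "Xtop = prod_topology euclidean euclidean"

definition sheet_rel :: "'a \<Rightarrow> (('a \<times> 'a) \<times> sheet) \<Rightarrow> (('a \<times> 'a) \<times> sheet) \<Rightarrow> bool" where
  "sheet_rel \<Omega> p q \<longleftrightarrow>
     p = q
     \<or> (fst p = (\<Omega>, \<Omega>) \<and> fst q = (\<Omega>, \<Omega>))
     \<or> (fst p = fst q \<and> fst (fst p) = \<Omega> \<and> snd p \<in> {Dot, Up} \<and> snd q \<in> {Dot, Up})
     \<or> (fst p = fst q \<and> snd (fst p) = \<Omega> \<and> snd p \<in> {Dot, Down} \<and> snd q \<in> {Dot, Down})"

definition sheet_class :: "'a \<Rightarrow> (('a \<times> 'a) \<times> sheet) \<Rightarrow> (('a \<times> 'a) \<times> sheet) set" where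
  "sheet_class \<Omega> p = {q. sheet_rel \<Omega> p q}"

definition Ytop :: "'a::topological_space \<Rightarrow> (('a \<times> 'a) \<times> sheet) set topology" where
  "Ytop \<Omega> = quot_topology (prod_topology Xtop (discrete_topology UNIV)) (sheet_class \<Omega>)"

definition proj :: "(('a \<times> 'a) \<times> sheet) set \<Rightarrow> 'a \<times> 'a" where
  "proj c = (THE x. \<exists>s. (x, s) \<in> c)"

end

theory Submission
  imports Defs
begin

text \<open>Where the first coordinate is below \<open>\<Omega>\<close> the sheet \<open>\<up>\<close> is not glued to any other sheet, so
  integrating the indicator of a clopen piece of it shows that the \<open>\<up>\<close>-mass of a weak-* continuous
  family is continuous there; symmetrically for \<open>\<down>\<close> where the second coordinate is below \<open>\<Omega>\<close>.
  Both masses are \<open>1/2\<close> on the boundary stratum, hence tend to \<open>1/2\<close> as the respective coordinate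
  tends to \<open>\<Omega>\<close>. Alternating between the two coordinates yields an increasing sequence of countable
  ordinals, whose limit \<open>d\<close> is again countable because \<open>\<Omega>\<close> has uncountable cofinality; continuity at
  \<open>(d, d)\<close> forces both masses to be \<open>1/2\<close> there, leaving no mass for the sheet \<open>\<bullet>\<close>.
  Normality of \<open>[0,\<Omega>)\<^sup>2\<close> rests on the same cofinality argument: a common limit point in
  \<open>[0,\<Omega>]\<^sup>2\<close> of two of its closed sets can be moved into \<open>[0,\<Omega>)\<^sup>2\<close>.\<close>

lemma istopology_quot_topology:
  "istopology (\<lambda>U. U \<subseteq> q ` topspace T \<and> openin T {p \<in> topspace T. q p \<in> U})"
proof -
  have "{p \<in> topspace T. q p \<in> S \<inter> U} = {p \<in> topspace T. q p \<in> S} \<inter> {p \<in> topspace T. q p \<in> U}"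
    and "{p \<in> topspace T. q p \<in> \<Union>K} = (\<Union>S\<in>K. {p \<in> topspace T. q p \<in> S})" for S U K
    by auto
  then show ?thesis
    unfolding istopology_def by (auto intro!: openin_Union)
qed

lemma openin_quot_topology:
  "openin (quot_topology T q) U \<longleftrightarrow> U \<subseteq> q ` topspace T \<and> openin T {p \<in> topspace T. q p \<in> U}"
  unfolding quot_topology_def by (simp add: topology_inverse'[OF istopology_quot_topology])

lemma topspace_quot_topology: "topspace (quot_topology T q) = q ` topspace T"
proof -
  have "{p \<in> topspace T. q p \<in> q ` topspace T} = topspace T"
    by auto
  then have "openin (quot_topology T q) (q ` topspace T)"
    unfolding openin_quot_topology by auto
  then show ?thesis
    by (metis openin_quot_topology openin_subset openin_topspace subset_antisym)
qed

lemma continuous_map_quot_topology: "continuous_map T (quot_topology T q) q"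
  by (auto simp: continuous_map_def topspace_quot_topology openin_quot_topology)

lemma continuous_map_from_quot_topology:
  assumes "continuous_map T Z (\<lambda>p. f (q p))"
  shows "continuous_map (quot_topology T q) Z f"
  unfolding continuous_map_def topspace_quot_topology
proof (intro conjI allI impI)
  show "f \<in> q ` topspace T \<rightarrow> topspace Z"
    using assms by (auto simp: continuous_map_def)
next
  fix V assume "openin Z V"
  moreover have "{p \<in> topspace T. q p \<in> {c \<in> q ` topspace T. f c \<in> V}} = {p \<in> topspace T. f (q p) \<in> V}"
    by auto
  ultimately show "openin (quot_topology T q) {c \<in> q ` topspace T. f c \<in> V}"
    unfolding openin_quot_topology using assms by (auto simp: continuous_map_def)
qed

lemma openin_quot_topology_image:
  assumes "openin T A" and "\<And>p p'. p \<in> A \<Longrightarrow> p' \<in> topspace T \<Longrightarrow> q p' = q p \<Longrightarrow> p' \<in> A"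
  shows "openin (quot_topology T q) (q ` A)"
proof -
  have "{p \<in> topspace T. q p \<in> q ` A} = A"
    using assms openin_subset by fastforce
  then show ?thesis
    unfolding openin_quot_topology using assms openin_subset by fastforce
qed

lemma continuous_map_indicator_clopen:
  assumes "openin X C" "closedin X C"
  shows "continuous_map X euclideanreal (\<lambda>x. if x \<in> C then 1 else 0)"
  using assms frontier_of_eq_empty[of C X] openin_subset[of X C]
  by (intro continuous_map_cases) auto

lemma normal_space_subtopology_of_closures:
  assumes "normal_space X"
    and "\<And>A B. closedin (subtopology X S) A \<Longrightarrow> closedin (subtopology X S) B \<Longrightarrow> disjnt A B
           \<Longrightarrow> disjnt (X closure_of A) (X closure_of B)"
  shows "normal_space (subtopology X S)"
  unfolding normal_space_def
proof (intro allI impI, elim conjE)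
  fix A B assume A: "closedin (subtopology X S) A" and B: "closedin (subtopology X S) B"
    and "disjnt A B"
  have sub: "A \<subseteq> topspace X \<inter> S" "B \<subseteq> topspace X \<inter> S"
    using closedin_subset[OF A] closedin_subset[OF B] by auto
  obtain U V where UV: "openin X U" "openin X V" "A \<subseteq> U" "B \<subseteq> V" "disjnt U V"
    using assms(1)[unfolded normal_space_closures, rule_format, of A B]
      assms(2)[OF A B \<open>disjnt A B\<close>] sub by auto
  show "\<exists>U V. openin (subtopology X S) U \<and> openin (subtopology X S) V \<and> A \<subseteq> U \<and> B \<subseteq> V \<and> disjnt U V"
  proof (intro exI conjI)
    show "openin (subtopology X S) (S \<inter> U)" "openin (subtopology X S) (S \<inter> V)"
      using UV(1,2) by (simp_all add: openin_subtopology_Int2)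
    show "A \<subseteq> S \<inter> U" "B \<subseteq> S \<inter> V"
      using sub UV(3,4) by auto
    show "disjnt (S \<inter> U) (S \<inter> V)"
      using UV(5) by (auto simp: disjnt_def)
  qed
qed

lemma normal_space_open_Un:
  assumes "normal_space (subtopology Y S)" "normal_space (subtopology Y T)"
    and "openin Y S" "openin Y T" "topspace Y = S \<union> T" "disjnt S T"
  shows "normal_space Y"
  unfolding normal_space_def
proof (intro allI impI, elim conjE)
  fix A B assume A: "closedin Y A" and B: "closedin Y B" and "disjnt A B"
  have restrict: "closedin (subtopology Y R) (A \<inter> R)" "closedin (subtopology Y R) (B \<inter> R)"
    "disjnt (A \<inter> R) (B \<inter> R)" for R
    using A B \<open>disjnt A B\<close> by (auto simp: closedin_subtopology disjnt_def)
  obtain U1 V1 where UV1: "openin (subtopology Y S) U1" "openin (subtopology Y S) V1"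
      "A \<inter> S \<subseteq> U1" "B \<inter> S \<subseteq> V1" "disjnt U1 V1"
    using assms(1)[unfolded normal_space_def, rule_format, OF conjI[OF restrict(1) conjI[OF restrict(2,3)]]]
    by blast
  obtain U2 V2 where UV2: "openin (subtopology Y T) U2" "openin (subtopology Y T) V2"
      "A \<inter> T \<subseteq> U2" "B \<inter> T \<subseteq> V2" "disjnt U2 V2"
    using assms(2)[unfolded normal_space_def, rule_format, OF conjI[OF restrict(1) conjI[OF restrict(2,3)]]]
    by blast
  have "U1 \<subseteq> S" "V1 \<subseteq> S" "U2 \<subseteq> T" "V2 \<subseteq> T"
    using UV1(1,2) UV2(1,2) openin_subset by fastforce+
  moreover have "openin Y U1" "openin Y V1" "openin Y U2" "openin Y V2"
    using openin_trans_full UV1 UV2 assms(3,4) by blast+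
  moreover have "A \<subseteq> U1 \<union> U2" "B \<subseteq> V1 \<union> V2"
    using closedin_subset[OF A] closedin_subset[OF B] assms(5) UV1(3,4) UV2(3,4) by blast+
  ultimately show "\<exists>U V. openin Y U \<and> openin Y V \<and> A \<subseteq> U \<and> B \<subseteq> V \<and> disjnt U V"
    using UV1(5) UV2(5) assms(6)
    by (intro exI[of _ "U1 \<union> U2"] exI[of _ "V1 \<union> V2"]) (auto simp: disjnt_def openin_Un)
qed

lemma open_atMost_wellorder:
  fixes t :: "'a::{wellorder,linorder_topology}"
  assumes "t < s"
  shows "open {..t}"
proof -
  have "{..t} = {..<(LEAST x. t < x)}"
    using LeastI[of "\<lambda>x. t < x", OF assms] not_less_Least[of _ "\<lambda>x. t < x"]
    by (auto simp: not_less intro: le_less_trans)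
  then show ?thesis by simp
qed

lemma compact_atMost_wellorder: "compact {..(t::'a::{wellorder,linorder_topology})}"
proof (rule compactI)
  fix C assume C: "\<forall>U\<in>C. open U" "{..t} \<subseteq> \<Union>C"
  have "x \<le> t \<Longrightarrow> \<exists>D\<subseteq>C. finite D \<and> {..x} \<subseteq> \<Union>D" for x
  proof (induction x rule: less_induct)
    case (less x)
    then obtain U where U: "U \<in> C" "x \<in> U" using C by blast
    show ?case
    proof (cases "\<exists>y. y < x")
      case True
      then obtain b where b: "b < x" "{b<..x} \<subseteq> U"
        using open_left[of U x] C U by blast
      with less obtain D where "D \<subseteq> C" "finite D" "{..b} \<subseteq> \<Union>D" by force
      moreover have "{..x} \<subseteq> {..b} \<union> {b<..x}"
        by auto
      ultimately show ?thesis
        using U b by (intro exI[of _ "insert U D"]) auto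
    next
      case False
      then have "{..x} \<subseteq> U" using U by (auto simp: order_le_less)
      with U show ?thesis by (intro exI[of _ "{U}"]) auto
    qed
  qed
  then show "\<exists>D\<subseteq>C. finite D \<and> {..t} \<subseteq> \<Union>D" by blast
qed

lemma incseq_tendsto_Least_upper_bound:
  fixes f :: "nat \<Rightarrow> 'a::{wellorder,linorder_topology}"
  assumes "incseq f" "\<And>n. f n \<le> b"
  shows "f \<longlonglongrightarrow> (LEAST u. \<forall>n. f n \<le> u)"
proof (rule increasing_tendsto)
  let ?l = "LEAST u. \<forall>n. f n \<le> u"
  have "\<forall>n. f n \<le> ?l"
    by (rule LeastI[of _ b]) (use assms(2) in blast)
  then show "\<forall>\<^sub>F n in sequentially. f n \<le> ?l"
    by simp
  fix x assume "x < ?l"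
  then obtain N where "x < f N"
    using Least_le[of "\<lambda>u. \<forall>n. f n \<le> u" x] by (meson leD not_le_imp_less)
  then show "\<forall>\<^sub>F n in sequentially. x < f n"
    using assms(1) unfolding eventually_sequentially incseq_def by (meson less_le_trans)
qed

lemma countable_nhds_base_wellorder:
  fixes t :: "'a::{wellorder,linorder_topology}"
  assumes "countable {x. x < t}" "t < s"
  obtains B :: "nat \<Rightarrow> 'a set"
  where "\<And>n. open (B n)" "\<And>n. t \<in> B n" "\<And>z. (\<And>n. z n \<in> B n) \<Longrightarrow> z \<longlonglongrightarrow> t"
proof
  define e where "e = from_nat_into {x. x < t}"
  define B where "B n = {..t} \<inter> (\<Inter>k\<in>{k. k \<le> n \<and> e k < t}. {e k<..})" for n
  show "open (B n)" for n
    unfolding B_def using open_atMost_wellorder[OF assms(2)] by (intro open_Int open_INT) auto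
  show "t \<in> B n" for n
    unfolding B_def by auto
  fix z assume z: "\<And>n. z n \<in> B n"
  show "z \<longlonglongrightarrow> t"
  proof (rule increasing_tendsto)
    show "\<forall>\<^sub>F n in sequentially. z n \<le> t"
      using z by (auto simp: B_def)
    fix a assume "a < t"
    then obtain k where "e k = a"
      using from_nat_into_surj[OF assms(1)] unfolding e_def by blast
    with \<open>a < t\<close> show "\<forall>\<^sub>F n in sequentially. a < z n"
      unfolding eventually_sequentially using z by (auto simp: B_def)
  qed
qed

lemma isCont_eq_if_approximated:
  fixes g :: "'a::t2_space \<Rightarrow> real"
  assumes "isCont g x" "w \<longlonglongrightarrow> x" "\<And>n. \<bar>g (w n) - c\<bar> < 1 / real (Suc n)"
  shows "g x = c"
proof (rule LIMSEQ_unique)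
  show "(\<lambda>n. g (w n)) \<longlonglongrightarrow> g x"
    using assms(1,2) by (rule isCont_tendsto_compose)
  have "(\<lambda>n. g (w n) - c) \<longlonglongrightarrow> 0"
    using assms(3) by (intro LIMSEQ_norm_0) simp
  then show "(\<lambda>n. g (w n)) \<longlonglongrightarrow> c"
    by (simp add: LIM_zero_iff)
qed

lemma LIMSEQ_subseq_in_closure:
  fixes r :: "nat \<Rightarrow> nat"
  assumes "z \<longlonglongrightarrow> q" "strict_mono r" "\<And>n. z (r n) \<in> A"
  shows "q \<in> closure A"
proof (rule Lim_in_closed_set[OF closed_closure _ trivial_limit_sequentially])
  show "(z \<circ> r) \<longlonglongrightarrow> q"
    using assms(1,2) by (rule LIMSEQ_subseq_LIMSEQ)
  show "\<forall>\<^sub>F n in sequentially. (z \<circ> r) n \<in> closure A"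
    using assms(3) closure_subset by (auto intro: always_eventually)
qed

lemma Hausdorff_space_euclidean_t2: "Hausdorff_space (euclidean :: 'a::t2_space topology)"
  unfolding Hausdorff_space_def
proof (intro allI impI)
  fix x y :: 'a assume "x \<in> topspace euclidean \<and> y \<in> topspace euclidean \<and> x \<noteq> y"
  then obtain U V where "open U" "open V" "x \<in> U" "y \<in> V" "U \<inter> V = {}"
    using hausdorff[of x y] by blast
  then show "\<exists>U V. openin euclidean U \<and> openin euclidean V \<and> x \<in> U \<and> y \<in> V \<and> disjnt U V"
    by (auto simp: disjnt_def)
qed

lemma UNIV_sheet: "(UNIV :: sheet set) = {Dot, Up, Down}"
  using sheet.exhaust by auto

lemma Xtop_eq_euclidean: "Xtop = euclidean"
  by (simp add: Xtop_def)

section \<open>The ordinal space \<open>[0,\<Omega>]\<close>\<close>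

locale first_uncountable =
  fixes \<Omega> :: "'a::{wellorder,linorder_topology}"
  assumes first_uncountable: "is_first_uncountable_top \<Omega>"
begin

lemma le_Omega: "x \<le> \<Omega>"
  using first_uncountable unfolding is_first_uncountable_top_def by auto

lemma uncountable_below_Omega: "uncountable {..<\<Omega>}"
  using first_uncountable unfolding is_first_uncountable_top_def lessThan_def by auto

lemma countable_below: "a < \<Omega> \<Longrightarrow> countable {..<a}"
  using first_uncountable unfolding is_first_uncountable_top_def lessThan_def by auto

lemma exists_less_Omega: "\<exists>a. a < \<Omega>"
  using uncountable_below_Omega by (metis countable_empty ex_in_conv lessThan_iff)

lemma dense_below_Omega:
  assumes "a < \<Omega>"
  shows "\<exists>w. a < w \<and> w < \<Omega>"
proof (rule ccontr)
  assume "\<not> ?thesis"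
  then have "x \<le> a" if "x < \<Omega>" for x
    using that not_le by blast
  then have "{..<\<Omega>} \<subseteq> insert a {..<a}"
    by (force simp: le_less)
  moreover have "countable (insert a {..<a})"
    using countable_below[OF assms] by simp
  ultimately show False
    using uncountable_below_Omega countable_subset by blast
qed

lemma countable_bounded_below_Omega:
  assumes "countable S" "S \<subseteq> {..<\<Omega>}"
  shows "\<exists>u<\<Omega>. \<forall>x\<in>S. x \<le> u"
proof (rule ccontr)
  assume "\<not> ?thesis"
  then have "{..<\<Omega>} \<subseteq> (\<Union>x\<in>S. {..<x})"
    by (auto simp: not_le)
  moreover have "countable (\<Union>x\<in>S. {..<x})"
    using assms countable_below by (intro countable_UN) auto
  ultimately show False
    using uncountable_below_Omega countable_subset by blast
qed

lemma exists_above_at_left_Omega: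
  assumes "a < \<Omega>" "eventually P (at_left \<Omega>)"
  shows "\<exists>y. a < y \<and> y < \<Omega> \<and> P y"
proof -
  obtain b where "b < \<Omega>" "\<forall>y>b. y < \<Omega> \<longrightarrow> P y"
    using assms(2) unfolding eventually_at_left[OF assms(1)] by blast
  moreover obtain y where "max a b < y" "y < \<Omega>"
    using dense_below_Omega[of "max a b"] assms(1) \<open>b < \<Omega>\<close> by auto
  ultimately show ?thesis
    by auto
qed

lemma incseq_converges_below_Omega:
  assumes "incseq f" "\<And>n. f n < \<Omega>"
  shows "\<exists>l<\<Omega>. f \<longlonglongrightarrow> l"
proof -
  obtain u where u: "u < \<Omega>" "\<And>n. f n \<le> u"
    using countable_bounded_below_Omega[of "range f"] assms(2) by auto
  have "(LEAST u. \<forall>n. f n \<le> u) \<le> u"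
    using u(2) by (intro Least_le) blast
  then show ?thesis
    using incseq_tendsto_Least_upper_bound[OF assms(1) u(2)] u(1) by (blast intro: le_less_trans)
qed

lemma compact_UNIV_upto_Omega: "compact (UNIV :: 'a set)"
proof -
  have "{..\<Omega>} = UNIV"
    using le_Omega by auto
  then show ?thesis
    using compact_atMost_wellorder[of \<Omega>] by simp
qed

text \<open>If \<open>t < \<Omega>\<close>, points chosen in \<open>W n l\<close> converge to \<open>t\<close>; at \<open>t = \<Omega>\<close> they are pushed above
  the level \<open>l\<close>, and so converge to the limit of any sequence of levels that dominates them.\<close>
lemma approaching_nhds:
  obtains W :: "nat \<Rightarrow> 'a \<Rightarrow> 'a set"
  where "\<And>n l. l < \<Omega> \<Longrightarrow> open (W n l)" "\<And>n l. l < \<Omega> \<Longrightarrow> t \<in> W n l"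
    and "\<And>z m l. (\<And>n. z n \<in> W n (m n)) \<Longrightarrow> (\<And>n. z n \<le> m (Suc n)) \<Longrightarrow> m \<longlonglongrightarrow> l
           \<Longrightarrow> z \<longlonglongrightarrow> (if t = \<Omega> then l else t)"
proof (cases "t = \<Omega>")
  case True
  show ?thesis
  proof
    fix z m :: "nat \<Rightarrow> 'a" and l assume z: "\<And>n. z n \<in> {m n<..}" "\<And>n. z n \<le> m (Suc n)" and "m \<longlonglongrightarrow> l"
    have "m n \<le> z n" for n
      using z(1)[of n] by simp
    then have "\<forall>\<^sub>F n in sequentially. m n \<le> z n" "\<forall>\<^sub>F n in sequentially. z n \<le> m (Suc n)"
      using z(2) by simp_all
    moreover have "(\<lambda>n. m (Suc n)) \<longlonglongrightarrow> l"
      using \<open>m \<longlonglongrightarrow> l\<close> LIMSEQ_Suc by blast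
    ultimately have "z \<longlonglongrightarrow> l"
      by (rule tendsto_sandwich[OF _ _ \<open>m \<longlonglongrightarrow> l\<close>])
    then show "z \<longlonglongrightarrow> (if t = \<Omega> then l else t)"
      using True by simp
  qed (use True in auto)
next
  case False
  then have "t < \<Omega>"
    using le_Omega order_le_less by blast
  then obtain B where "\<And>n. open (B n)" "\<And>n. t \<in> B n" "\<And>z. (\<And>n. z n \<in> B n) \<Longrightarrow> z \<longlonglongrightarrow> t"
    using countable_nhds_base_wellorder countable_below[of t] by (metis lessThan_def)
  then show ?thesis
    using False by (intro that[of "\<lambda>n l. B n"]) auto
qed

lemma dominating_levels:
  assumes "\<And>n l. l < \<Omega> \<Longrightarrow> F n l \<in> {..<\<Omega>} \<times> {..<\<Omega>}"
  obtains m where "\<And>n. m n < \<Omega>" "incseq m"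
    and "\<And>n. fst (F n (m n)) \<le> m (Suc n)" "\<And>n. snd (F n (m n)) \<le> m (Suc n)"
proof -
  obtain a0 where a0: "a0 < \<Omega>"
    using exists_less_Omega by blast
  define m where "m = rec_nat a0 (\<lambda>n l. max l (max (fst (F n l)) (snd (F n l))))"
  have m_Suc: "m (Suc n) = max (m n) (max (fst (F n (m n))) (snd (F n (m n))))" for n
    by (simp add: m_def)
  have "m n < \<Omega>" for n
  proof (induction n)
    case 0
    then show ?case using a0 by (simp add: m_def)
  next
    case (Suc n)
    then show ?case
      using assms[OF Suc] by (auto simp: m_Suc mem_Times_iff)
  qed
  moreover have "incseq m"
    by (rule incseq_SucI) (simp add: m_Suc)
  ultimately show ?thesis
    by (rule that) (simp_all add: m_Suc le_max_iff_disj)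
qed

text \<open>A point in the closures of two subsets of \<open>[0,\<Omega>)\<^sup>2\<close> is approximated alternately from
  both sets by a sequence whose coordinates are bounded by a nondecreasing sequence of
  levels below \<open>\<Omega>\<close>; since \<open>\<Omega>\<close> has uncountable cofinality the levels converge below \<open>\<Omega>\<close>,
  and so does the alternating sequence.\<close>
lemma common_closure_point_below_Omega:
  assumes p: "p \<in> closure A" "p \<in> closure B"
    and AB: "A \<subseteq> {..<\<Omega>} \<times> {..<\<Omega>}" "B \<subseteq> {..<\<Omega>} \<times> {..<\<Omega>}"
  shows "\<exists>q \<in> {..<\<Omega>} \<times> {..<\<Omega>}. q \<in> closure A \<and> q \<in> closure B"
proof -
  obtain p1 p2 where p12: "p = (p1, p2)" by fastforce
  obtain W1 where W1: "\<And>n l. l < \<Omega> \<Longrightarrow> open (W1 n l)" "\<And>n l. l < \<Omega> \<Longrightarrow> p1 \<in> W1 n l"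
    and lim1: "\<And>z m l. (\<And>n. z n \<in> W1 n (m n)) \<Longrightarrow> (\<And>n. z n \<le> m (Suc n)) \<Longrightarrow> m \<longlonglongrightarrow> l
                 \<Longrightarrow> z \<longlonglongrightarrow> (if p1 = \<Omega> then l else p1)"
    using approaching_nhds[of p1] by blast
  obtain W2 where W2: "\<And>n l. l < \<Omega> \<Longrightarrow> open (W2 n l)" "\<And>n l. l < \<Omega> \<Longrightarrow> p2 \<in> W2 n l"
    and lim2: "\<And>z m l. (\<And>n. z n \<in> W2 n (m n)) \<Longrightarrow> (\<And>n. z n \<le> m (Suc n)) \<Longrightarrow> m \<longlonglongrightarrow> l
                 \<Longrightarrow> z \<longlonglongrightarrow> (if p2 = \<Omega> then l else p2)"
    using approaching_nhds[of p2] by blast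
  define S where "S n = (if even n then A else B)" for n :: nat
  have "(W1 n l \<times> W2 n l) \<inter> S n \<noteq> {}" if "l < \<Omega>" for n l
  proof -
    have "open (W1 n l \<times> W2 n l)" "p \<in> W1 n l \<times> W2 n l"
      using W1 W2 that by (auto simp: p12 intro: open_Times)
    moreover have "p \<in> closure (S n)"
      using p by (simp add: S_def)
    ultimately show ?thesis
      using open_Int_closure_eq_empty by blast
  qed
  then have Z_ex: "\<exists>z. z \<in> S n \<and> fst z \<in> W1 n l \<and> snd z \<in> W2 n l" if "l < \<Omega>" for n l
    using that by (fastforce simp: mem_Times_iff)
  define Z where "Z n l = (SOME z. z \<in> S n \<and> fst z \<in> W1 n l \<and> snd z \<in> W2 n l)" for n l
  have Z: "Z n l \<in> S n" "fst (Z n l) \<in> W1 n l" "snd (Z n l) \<in> W2 n l" if "l < \<Omega>" for n l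
    using someI_ex[OF Z_ex[OF that]] unfolding Z_def by blast+
  have S_below: "S n \<subseteq> {..<\<Omega>} \<times> {..<\<Omega>}" for n
    using AB by (simp add: S_def)
  obtain m where m: "\<And>n. m n < \<Omega>" "incseq m"
    and m_bound: "\<And>n. fst (Z n (m n)) \<le> m (Suc n)" "\<And>n. snd (Z n (m n)) \<le> m (Suc n)"
    using dominating_levels[of Z] Z(1) S_below by blast
  then obtain l where l: "l < \<Omega>" "m \<longlonglongrightarrow> l"
    using incseq_converges_below_Omega by blast
  define z where "z n = Z n (m n)" for n
  define q where "q = (if p1 = \<Omega> then l else p1, if p2 = \<Omega> then l else p2)"
  have "(\<lambda>n. fst (z n)) \<longlonglongrightarrow> fst q"
    unfolding q_def fst_conv by (rule lim1[OF _ _ l(2)]) (simp_all add: z_def Z m m_bound)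
  moreover have "(\<lambda>n. snd (z n)) \<longlonglongrightarrow> snd q"
    unfolding q_def snd_conv by (rule lim2[OF _ _ l(2)]) (simp_all add: z_def Z m m_bound)
  ultimately have z_lim: "z \<longlonglongrightarrow> q"
    using tendsto_Pair by fastforce
  have z_in: "z n \<in> S n" for n
    using Z(1) m by (simp add: z_def)
  have "z (2 * n) \<in> A" "z (2 * n + 1) \<in> B" for n
    using z_in[of "2 * n"] z_in[of "2 * n + 1"] by (simp_all add: S_def)
  then have "q \<in> closure A" "q \<in> closure B"
    using LIMSEQ_subseq_in_closure[OF z_lim, of "\<lambda>n. 2 * n" A]
      LIMSEQ_subseq_in_closure[OF z_lim, of "\<lambda>n. 2 * n + 1" B]
    by (simp_all add: strict_mono_def)
  moreover have "q \<in> {..<\<Omega>} \<times> {..<\<Omega>}"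
    using l(1) le_Omega[of p1] le_Omega[of p2] by (auto simp: q_def order_le_less)
  ultimately show ?thesis
    by blast
qed

lemma disjoint_closures_below_Omega:
  assumes "closedin (top_of_set ({..<\<Omega>} \<times> {..<\<Omega>})) A" "closedin (top_of_set ({..<\<Omega>} \<times> {..<\<Omega>})) B"
    and "disjnt A B"
  shows "disjnt (closure A) (closure B)"
proof -
  have closure_A: "closure A \<inter> ({..<\<Omega>} \<times> {..<\<Omega>}) \<subseteq> A" and A: "A \<subseteq> {..<\<Omega>} \<times> {..<\<Omega>}"
    using assms(1) closure_minimal[of A] by (auto simp: closedin_closed)
  have closure_B: "closure B \<inter> ({..<\<Omega>} \<times> {..<\<Omega>}) \<subseteq> B" and B: "B \<subseteq> {..<\<Omega>} \<times> {..<\<Omega>}"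
    using assms(2) closure_minimal[of B] by (auto simp: closedin_closed)
  show ?thesis
    unfolding disjnt_def
  proof (rule ccontr)
    assume "closure A \<inter> closure B \<noteq> {}"
    then obtain p where "p \<in> closure A" "p \<in> closure B"
      by blast
    then obtain q where "q \<in> {..<\<Omega>} \<times> {..<\<Omega>}" "q \<in> closure A" "q \<in> closure B"
      using common_closure_point_below_Omega[OF _ _ A B] by blast
    then have "q \<in> A \<inter> B"
      using closure_A closure_B by blast
    then show False
      using assms(3) by (auto simp: disjnt_def)
  qed
qed

lemma compact_space_square: "compact_space (euclidean :: ('a \<times> 'a) topology)"
  using compact_Times[OF compact_UNIV_upto_Omega compact_UNIV_upto_Omega] by (simp add: compact_space_def)

lemma normal_space_square: "normal_space (euclidean :: ('a \<times> 'a) topology)"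
  using compact_space_square Hausdorff_space_euclidean_t2 by (intro compact_Hausdorff_or_regular_imp_normal_space) auto

lemma normal_space_below_Omega_square: "normal_space (top_of_set ({..<\<Omega>} \<times> {..<\<Omega>}))"
  by (rule normal_space_subtopology_of_closures[OF normal_space_square])
    (simp add: disjoint_closures_below_Omega)

lemma normal_space_below_Omega: "normal_space (top_of_set {..<\<Omega>})"
proof -
  obtain a where a: "a < \<Omega>"
    using exists_less_Omega by blast
  have "closedin (top_of_set ({..<\<Omega>} \<times> {..<\<Omega>})) ({a} \<times> {..<\<Omega>})"
    using a by (auto simp: closedin_closed closed_Times intro!: exI[of _ "{a} \<times> UNIV"])
  then have "normal_space (subtopology (top_of_set ({..<\<Omega>} \<times> {..<\<Omega>})) ({a} \<times> {..<\<Omega>}))"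
    by (rule normal_space_closed_subtopology[OF normal_space_below_Omega_square])
  moreover have "{..<\<Omega>} \<times> {..<\<Omega>} \<inter> ({a} \<times> {..<\<Omega>}) = {a} \<times> {..<\<Omega>}"
    using a by auto
  ultimately have "normal_space (top_of_set ({a} \<times> {..<\<Omega>}))"
    by (simp add: subtopology_subtopology)
  moreover have "top_of_set {..<\<Omega>} homeomorphic_space top_of_set ({a} \<times> {..<\<Omega>})"
    using homeomorphic_space_prod_topology_sing2[of a euclidean "top_of_set {..<\<Omega>}"]
    by (simp add: subtopology_Times)
  ultimately show ?thesis
    using homeomorphic_normal_space by blast
qed

lemma normal_space_boundary_stratum:
  "normal_space (top_of_set ({\<Omega>} \<times> {..<\<Omega>} \<union> {..<\<Omega>} \<times> {\<Omega>}))"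
proof (rule normal_space_open_Un)
  let ?X2 = "{\<Omega>} \<times> {..<\<Omega>} \<union> {..<\<Omega>} \<times> {\<Omega>}"
  have "top_of_set {..<\<Omega>} homeomorphic_space top_of_set ({\<Omega>} \<times> {..<\<Omega>})"
    using homeomorphic_space_prod_topology_sing2[of \<Omega> euclidean "top_of_set {..<\<Omega>}"]
    by (simp add: subtopology_Times)
  then have "normal_space (top_of_set ({\<Omega>} \<times> {..<\<Omega>}))"
    using normal_space_below_Omega homeomorphic_normal_space by metis
  then show "normal_space (subtopology (top_of_set ?X2) ({\<Omega>} \<times> {..<\<Omega>}))"
    by (simp add: subtopology_subtopology Int_absorb1)
  have "top_of_set {..<\<Omega>} homeomorphic_space top_of_set ({..<\<Omega>} \<times> {\<Omega>})"
    using homeomorphic_space_prod_topology_sing1[of \<Omega> euclidean "top_of_set {..<\<Omega>}"]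
    by (simp add: subtopology_Times)
  then have "normal_space (top_of_set ({..<\<Omega>} \<times> {\<Omega>}))"
    using normal_space_below_Omega homeomorphic_normal_space by metis
  then show "normal_space (subtopology (top_of_set ?X2) ({..<\<Omega>} \<times> {\<Omega>}))"
    by (simp add: subtopology_subtopology Int_absorb1)
  have "{\<Omega>} \<times> {..<\<Omega>} = ?X2 \<inter> (UNIV \<times> {..<\<Omega>})" "{..<\<Omega>} \<times> {\<Omega>} = ?X2 \<inter> ({..<\<Omega>} \<times> UNIV)"
    by auto
  then show "openin (top_of_set ?X2) ({\<Omega>} \<times> {..<\<Omega>})" "openin (top_of_set ?X2) ({..<\<Omega>} \<times> {\<Omega>})"
    by (metis open_Times open_UNIV open_lessThan openin_open_Int)+
qed (auto simp: disjnt_def)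

section \<open>The branched cover\<close>

abbreviation cls :: "('a \<times> 'a) \<times> sheet \<Rightarrow> (('a \<times> 'a) \<times> sheet) set"
  where "cls \<equiv> sheet_class \<Omega>"

abbreviation sheets :: "(('a \<times> 'a) \<times> sheet) topology"
  where "sheets \<equiv> prod_topology euclidean (discrete_topology UNIV)"

lemma Ytop_eq_quot_topology: "Ytop \<Omega> = quot_topology sheets cls"
  by (simp add: Ytop_def Xtop_eq_euclidean)

lemma sheet_rel_iff:
  "sheet_rel \<Omega> (x, s) (x', s') \<longleftrightarrow> x' = x \<and> (s = s' \<or> x = (\<Omega>, \<Omega>)
     \<or> (fst x = \<Omega> \<and> s \<in> {Dot, Up} \<and> s' \<in> {Dot, Up})
     \<or> (snd x = \<Omega> \<and> s \<in> {Dot, Down} \<and> s' \<in> {Dot, Down}))"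
  unfolding sheet_rel_def by auto

lemma equivp_sheet_rel: "equivp (sheet_rel \<Omega>)"
proof (rule equivpI)
  show "reflp (sheet_rel \<Omega>)"
    by (simp add: reflp_def sheet_rel_def)
  show "symp (sheet_rel \<Omega>)"
    unfolding symp_def by (auto simp: sheet_rel_iff)
  show "transp (sheet_rel \<Omega>)"
    unfolding transp_def by (auto simp: sheet_rel_iff)
qed

lemma sheet_class_eq_iff: "cls p = cls q \<longleftrightarrow> sheet_rel \<Omega> p q"
  using equivp_sheet_rel unfolding sheet_class_def equivp_def by (metis Collect_cong mem_Collect_eq)

lemma sheet_class_Pair_eq_iff:
  "cls (x, s) = cls (x', s') \<longleftrightarrow> x' = x \<and> (s = s' \<or> x = (\<Omega>, \<Omega>)
     \<or> (fst x = \<Omega> \<and> s \<in> {Dot, Up} \<and> s' \<in> {Dot, Up})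
     \<or> (snd x = \<Omega> \<and> s \<in> {Dot, Down} \<and> s' \<in> {Dot, Down}))"
  by (simp add: sheet_class_eq_iff sheet_rel_iff)

lemma proj_sheet_class [simp]: "proj (cls p) = fst p"
proof -
  obtain x s where p: "p = (x, s)"
    by fastforce
  have "(THE x'. \<exists>s'. (x', s') \<in> cls (x, s)) = x"
    using equivp_reflp[OF equivp_sheet_rel, of "(x, s)"]
    by (intro the_equality) (auto simp: sheet_class_def sheet_rel_iff)
  then show ?thesis
    by (simp add: proj_def p)
qed

lemma topspace_Ytop: "topspace (Ytop \<Omega>) = range cls"
  by (simp add: Ytop_eq_quot_topology topspace_quot_topology)

lemma fiber_eq: "fiber (Ytop \<Omega>) proj x = {cls (x, Dot), cls (x, Up), cls (x, Down)}"
proof -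
  have "fiber (Ytop \<Omega>) proj x = cls ` ({x} \<times> UNIV)"
    unfolding fiber_def topspace_Ytop by force
  also have "\<dots> = cls ` ({x} \<times> {Dot, Up, Down})"
    by (simp only: UNIV_sheet)
  finally show ?thesis
    by simp
qed

lemma mem_fiber_iff: "y \<in> fiber (Ytop \<Omega>) proj x \<longleftrightarrow> (\<exists>s. y = cls (x, s))"
proof
  assume "y \<in> fiber (Ytop \<Omega>) proj x"
  then obtain p where "y = cls p" "fst p = x"
    by (auto simp: fiber_def topspace_Ytop)
  then show "\<exists>s. y = cls (x, s)"
    by (metis prod.collapse)
qed (auto simp: fiber_def topspace_Ytop)

lemma card_fiber_corner: "card (fiber (Ytop \<Omega>) proj (\<Omega>, \<Omega>)) = 1"
proof -
  have "cls ((\<Omega>, \<Omega>), Up) = cls ((\<Omega>, \<Omega>), Dot)" "cls ((\<Omega>, \<Omega>), Down) = cls ((\<Omega>, \<Omega>), Dot)"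
    by (simp_all add: sheet_class_Pair_eq_iff)
  then show ?thesis
    by (simp add: fiber_eq)
qed

lemma card_fiber_boundary:
  assumes "x \<in> {\<Omega>} \<times> {..<\<Omega>} \<union> {..<\<Omega>} \<times> {\<Omega>}"
  shows "card (fiber (Ytop \<Omega>) proj x) = 2"
  using assms by (auto simp: fiber_eq sheet_class_Pair_eq_iff card_insert_if)

lemma card_fiber_interior:
  assumes "x \<in> {..<\<Omega>} \<times> {..<\<Omega>}"
  shows "card (fiber (Ytop \<Omega>) proj x) = 3"
  using assms by (auto simp: fiber_eq sheet_class_Pair_eq_iff card_insert_if)

definition saturated :: "(('a \<times> 'a) \<times> sheet) set \<Rightarrow> bool"
  where "saturated A \<longleftrightarrow> (\<forall>p q. p \<in> A \<longrightarrow> sheet_rel \<Omega> p q \<longrightarrow> q \<in> A)"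

lemma sheet_class_in_image_iff: "saturated A \<Longrightarrow> cls p \<in> cls ` A \<longleftrightarrow> p \<in> A"
  unfolding saturated_def by (metis image_iff sheet_class_eq_iff)

lemma saturated_Compl: "saturated A \<Longrightarrow> saturated (- A)"
  unfolding saturated_def using equivp_symp[OF equivp_sheet_rel] by blast

lemma openin_Ytop_image: "openin sheets A \<Longrightarrow> saturated A \<Longrightarrow> openin (Ytop \<Omega>) (cls ` A)"
  unfolding Ytop_eq_quot_topology
  by (erule openin_quot_topology_image) (metis saturated_def sheet_class_eq_iff)

lemma closedin_Ytop_image:
  assumes "closedin sheets A" "saturated A"
  shows "closedin (Ytop \<Omega>) (cls ` A)"
proof -
  have "topspace (Ytop \<Omega>) - cls ` A = cls ` (- A)"
    using sheet_class_in_image_iff[OF assms(2)] by (auto simp: topspace_Ytop)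
  moreover have "openin (Ytop \<Omega>) (cls ` (- A))"
    using assms by (intro openin_Ytop_image saturated_Compl) (auto simp: closedin_def Compl_eq_Diff_UNIV)
  ultimately show ?thesis
    by (simp add: closedin_def topspace_Ytop image_subset_iff)
qed

lemma clopen_sheet_piece:
  assumes "open V" "closed V" and isolated: "\<forall>x\<in>V. \<forall>s'. cls (x, s') = cls (x, s) \<longrightarrow> s' = s"
  shows "openin (Ytop \<Omega>) (cls ` (V \<times> {s}))" "closedin (Ytop \<Omega>) (cls ` (V \<times> {s}))"
    and "\<And>x s'. x \<in> V \<Longrightarrow> cls (x, s') \<in> cls ` (V \<times> {s}) \<longleftrightarrow> s' = s"
proof -
  have sat: "saturated (V \<times> {s})"
    unfolding saturated_def
  proof (intro allI impI)
    fix p q assume p: "p \<in> V \<times> {s}" and "sheet_rel \<Omega> p q"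
    moreover obtain x' s' where "q = (x', s')"
      by fastforce
    ultimately have "x' = fst p" "cls (fst p, s') = cls (fst p, s)"
      using sheet_class_eq_iff[of p q] by (auto simp: sheet_rel_iff)
    with p isolated show "q \<in> V \<times> {s}"
      using \<open>q = (x', s')\<close> by auto
  qed
  show "openin (Ytop \<Omega>) (cls ` (V \<times> {s}))"
    using assms(1) sat by (intro openin_Ytop_image) (simp_all add: openin_prod_Times_iff)
  show "closedin (Ytop \<Omega>) (cls ` (V \<times> {s}))"
    using assms(2) sat by (intro closedin_Ytop_image) (simp_all add: closedin_prod_Times_iff)
  show "x \<in> V \<Longrightarrow> cls (x, s') \<in> cls ` (V \<times> {s}) \<longleftrightarrow> s' = s" for x s'
    using sheet_class_in_image_iff[OF sat] by simp
qed

lemma up_region: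
  assumes "a < \<Omega>"
  shows "open ({..a} \<times> (UNIV :: 'a set))" "closed ({..a} \<times> (UNIV :: 'a set))"
    and "\<forall>x\<in>{..a} \<times> UNIV. \<forall>s. cls (x, s) = cls (x, Up) \<longrightarrow> s = Up"
  using open_atMost_wellorder[OF assms] assms
  by (auto simp: open_Times closed_Times sheet_class_Pair_eq_iff)

lemma down_region:
  assumes "b < \<Omega>"
  shows "open ((UNIV :: 'a set) \<times> {..b})" "closed ((UNIV :: 'a set) \<times> {..b})"
    and "\<forall>x\<in>UNIV \<times> {..b}. \<forall>s. cls (x, s) = cls (x, Down) \<longrightarrow> s = Down"
  using open_atMost_wellorder[OF assms] assms
  by (auto simp: open_Times closed_Times sheet_class_Pair_eq_iff)

lemma compact_space_Ytop: "compact_space (Ytop \<Omega>)"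
proof -
  have "compact_space (discrete_topology (UNIV :: sheet set))"
    by (simp add: compact_space_discrete_topology UNIV_sheet)
  then have "compact_space sheets"
    using compact_space_square by (simp add: compact_space_prod_topology)
  then have "compactin (Ytop \<Omega>) (cls ` topspace sheets)"
    unfolding Ytop_eq_quot_topology compact_space_def by (rule image_compactin[OF _ continuous_map_quot_topology])
  then show ?thesis
    by (simp add: compact_space_def topspace_Ytop)
qed

lemma continuous_map_proj: "continuous_map (Ytop \<Omega>) Xtop proj"
  unfolding Ytop_eq_quot_topology Xtop_eq_euclidean
  by (rule continuous_map_from_quot_topology) (simp add: continuous_map_fst)

lemma separating_clopen_in_fiber:
  assumes "cls (x, s1) \<noteq> cls (x, s2)"
  shows "\<exists>C. openin (Ytop \<Omega>) C \<and> closedin (Ytop \<Omega>) C \<and> (cls (x, s1) \<in> C \<longleftrightarrow> cls (x, s2) \<notin> C)"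
proof -
  have "s1 \<noteq> s2" "x \<noteq> (\<Omega>, \<Omega>)"
    using assms by (auto simp: sheet_class_Pair_eq_iff)
  then consider "Up \<in> {s1, s2}" "fst x < \<Omega>" | "Down \<in> {s1, s2}" "snd x < \<Omega>"
    using assms le_Omega[of "fst x"] le_Omega[of "snd x"]
    by (cases s1; cases s2; cases x) (auto simp: sheet_class_Pair_eq_iff order_le_less)
  then show ?thesis
  proof cases
    case 1
    have "x \<in> {..fst x} \<times> UNIV"
      by (simp add: mem_Times_iff)
    then have "cls (x, s) \<in> cls ` (({..fst x} \<times> UNIV) \<times> {Up}) \<longleftrightarrow> s = Up" for s
      using clopen_sheet_piece(3)[OF up_region[OF 1(2)]] by blast
    with 1 \<open>s1 \<noteq> s2\<close> show ?thesis
      using clopen_sheet_piece(1,2)[OF up_region[OF 1(2)]]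
      by (intro exI[of _ "cls ` (({..fst x} \<times> UNIV) \<times> {Up})"]) auto
  next
    case 2
    have "x \<in> UNIV \<times> {..snd x}"
      by (simp add: mem_Times_iff)
    then have "cls (x, s) \<in> cls ` ((UNIV \<times> {..snd x}) \<times> {Down}) \<longleftrightarrow> s = Down" for s
      using clopen_sheet_piece(3)[OF down_region[OF 2(2)]] by blast
    with 2 \<open>s1 \<noteq> s2\<close> show ?thesis
      using clopen_sheet_piece(1,2)[OF down_region[OF 2(2)]]
      by (intro exI[of _ "cls ` ((UNIV \<times> {..snd x}) \<times> {Down})"]) auto
  qed
qed

lemma Hausdorff_space_Ytop: "Hausdorff_space (Ytop \<Omega>)"
  unfolding Hausdorff_space_def topspace_Ytop
proof (intro allI impI, elim conjE)
  fix y1 y2 assume "y1 \<in> range cls" "y2 \<in> range cls" "y1 \<noteq> y2"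
  then obtain p1 p2 where "y1 = cls p1" "y2 = cls p2"
    by blast
  moreover obtain x1 s1 x2 s2 where "p1 = (x1, s1)" "p2 = (x2, s2)"
    by fastforce
  ultimately have y: "y1 = cls (x1, s1)" "y2 = cls (x2, s2)"
    by simp_all
  show "\<exists>U V. openin (Ytop \<Omega>) U \<and> openin (Ytop \<Omega>) V \<and> y1 \<in> U \<and> y2 \<in> V \<and> disjnt U V"
  proof (cases "x1 = x2")
    case True
    then obtain C where C: "openin (Ytop \<Omega>) C" "closedin (Ytop \<Omega>) C" "y1 \<in> C \<longleftrightarrow> y2 \<notin> C"
      using separating_clopen_in_fiber \<open>y1 \<noteq> y2\<close> y by blast
    let ?D = "topspace (Ytop \<Omega>) - C"
    have "openin (Ytop \<Omega>) ?D" "disjnt C ?D" "disjnt ?D C"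
      using openin_diff[OF openin_topspace C(2)] by (auto simp: disjnt_def)
    moreover have "y1 \<in> topspace (Ytop \<Omega>)" "y2 \<in> topspace (Ytop \<Omega>)"
      by (simp_all add: y topspace_Ytop)
    ultimately show ?thesis
      using C by (cases "y1 \<in> C") blast+
  next
    case False
    then obtain U V where "open U" "open V" "x1 \<in> U" "x2 \<in> V" "U \<inter> V = {}"
      using hausdorff[of x1 x2] by blast
    then show ?thesis
      using continuous_map_proj[unfolded Xtop_eq_euclidean continuous_map_def]
      by (intro exI[of _ "{y \<in> topspace (Ytop \<Omega>). proj y \<in> U}"] exI[of _ "{y \<in> topspace (Ytop \<Omega>). proj y \<in> V}"])
         (auto simp: y topspace_Ytop disjnt_def)
  qed
qed

lemma open_map_proj: "open_map (Ytop \<Omega>) Xtop proj"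
  unfolding open_map_def Xtop_eq_euclidean
proof (intro allI impI)
  fix U assume U: "openin (Ytop \<Omega>) U"
  then have "U \<subseteq> range cls" "openin sheets {p. cls p \<in> U}"
    unfolding Ytop_eq_quot_topology openin_quot_topology by simp_all
  then have "proj ` U = fst ` {p. cls p \<in> U}"
    by (force simp: image_iff)
  moreover have "openin euclidean (fst ` {p. cls p \<in> U})"
    using open_map_fst[of euclidean "discrete_topology (UNIV :: sheet set)"] \<open>openin sheets {p. cls p \<in> U}\<close>
    unfolding open_map_def by blast
  ultimately show "openin euclidean (proj ` U)"
    by simp
qed

lemma branched_cover: "branched_cover (Ytop \<Omega>) Xtop proj"
  unfolding branched_cover_def
proof (intro conjI)
  show "compact_space (Xtop :: ('a \<times> 'a) topology)"
    by (simp add: Xtop_eq_euclidean compact_space_square)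
  show "Hausdorff_space (Xtop :: ('a \<times> 'a) topology)"
    by (simp add: Xtop_eq_euclidean Hausdorff_space_euclidean_t2)
  show "proj ` topspace (Ytop \<Omega>) = topspace Xtop"
    by (force simp: topspace_Ytop Xtop_eq_euclidean image_iff)
  show "\<exists>N. \<forall>x\<in>topspace Xtop. finite {y \<in> topspace (Ytop \<Omega>). proj y = x} \<and> card {y \<in> topspace (Ytop \<Omega>). proj y = x} \<le> N"
    using fiber_eq by (intro exI[of _ 3]) (simp add: fiber_def[symmetric] card_insert_le_m1)
qed (simp_all add: compact_space_Ytop Hausdorff_space_Ytop continuous_map_proj open_map_proj)

section \<open>Weak-* continuous families of fiber measures\<close>

context
  fixes \<mu> :: "'a \<times> 'a \<Rightarrow> (('a \<times> 'a) \<times> sheet) set \<Rightarrow> real"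
  assumes weak_star: "weak_star_continuous (Ytop \<Omega>) Xtop proj \<mu>"
begin

lemma isCont_sheet_mass:
  assumes "open V" "closed V" "\<forall>x\<in>V. \<forall>s'. cls (x, s') = cls (x, s) \<longrightarrow> s' = s" and "x \<in> V"
  shows "isCont (\<lambda>x. \<mu> x (cls (x, s))) x"
proof -
  let ?C = "cls ` (V \<times> {s})"
  let ?F = "\<lambda>x. \<Sum>y\<in>fiber (Ytop \<Omega>) proj x. \<mu> x y * (if y \<in> ?C then 1 else 0)"
  have "continuous_on UNIV ?F"
    using weak_star continuous_map_indicator_clopen[OF clopen_sheet_piece(1,2)[OF assms(1-3)]]
    unfolding weak_star_continuous_def Xtop_eq_euclidean by simp
  moreover have "?F x' = \<mu> x' (cls (x', s))" if "x' \<in> V" for x'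
  proof -
    have mem: "cls (x', s') \<in> ?C \<longleftrightarrow> s' = s" for s'
      using clopen_sheet_piece(3)[OF assms(1-3) that] .
    have "fiber (Ytop \<Omega>) proj x' \<inter> ?C = {cls (x', s)}"
    proof (rule set_eqI)
      fix y
      have "y \<in> fiber (Ytop \<Omega>) proj x' \<inter> ?C \<longleftrightarrow> (\<exists>s'. y = cls (x', s') \<and> cls (x', s') \<in> ?C)"
        unfolding Int_iff mem_fiber_iff by blast
      then show "y \<in> fiber (Ytop \<Omega>) proj x' \<inter> ?C \<longleftrightarrow> y \<in> {cls (x', s)}"
        unfolding mem by simp
    qed
    then show ?thesis
      using sum.inter_restrict[of "fiber (Ytop \<Omega>) proj x'" "\<mu> x'" ?C]
      by (simp add: fiber_eq if_distrib cong: if_cong)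
  qed
  ultimately have "continuous_on V (\<lambda>x. \<mu> x (cls (x, s)))"
    using continuous_on_subset continuous_on_cong by (metis (no_types, lifting) subset_UNIV)
  then show ?thesis
    using assms(1,4) continuous_on_eq_continuous_at by blast
qed

abbreviation up_mass :: "'a \<times> 'a \<Rightarrow> real"
  where "up_mass x \<equiv> \<mu> x (cls (x, Up))"

abbreviation down_mass :: "'a \<times> 'a \<Rightarrow> real"
  where "down_mass x \<equiv> \<mu> x (cls (x, Down))"

lemma isCont_up_mass: "fst x < \<Omega> \<Longrightarrow> isCont up_mass x"
  by (rule isCont_sheet_mass[OF up_region]) (auto simp: mem_Times_iff)

lemma isCont_down_mass: "snd x < \<Omega> \<Longrightarrow> isCont down_mass x"
  by (rule isCont_sheet_mass[OF down_region]) (auto simp: mem_Times_iff)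

lemma prob_family_mass_sum_interior:
  assumes "prob_family (Ytop \<Omega>) Xtop proj \<mu>" "x \<in> {..<\<Omega>} \<times> {..<\<Omega>}"
  shows "\<mu> x (cls (x, Dot)) + up_mass x + down_mass x = 1"
proof -
  have "(\<Sum>y\<in>fiber (Ytop \<Omega>) proj x. \<mu> x y) = 1"
    using assms(1) unfolding prob_family_def Xtop_eq_euclidean by (cases x) simp
  moreover have "cls (x, Dot) \<noteq> cls (x, Up)" "cls (x, Dot) \<noteq> cls (x, Down)" "cls (x, Up) \<noteq> cls (x, Down)"
    using assms(2) by (auto simp: sheet_class_Pair_eq_iff)
  ultimately show ?thesis
    by (simp add: fiber_eq add.assoc)
qed

context
  assumes half: "\<forall>x\<in>{\<Omega>} \<times> {..<\<Omega>} \<union> {..<\<Omega>} \<times> {\<Omega>}. \<forall>y\<in>fiber (Ytop \<Omega>) proj x. \<mu> x y = 1/2"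
begin

lemma up_mass_tendsto_half:
  assumes "a < \<Omega>"
  shows "((\<lambda>y. up_mass (a, y)) \<longlongrightarrow> 1/2) (at_left \<Omega>)"
proof -
  have "((\<lambda>y. (a, y)) \<longlongrightarrow> (a, \<Omega>)) (at_left \<Omega>)"
    by (intro tendsto_intros)
  then have "((\<lambda>y. up_mass (a, y)) \<longlongrightarrow> up_mass (a, \<Omega>)) (at_left \<Omega>)"
    using isCont_tendsto_compose[OF isCont_up_mass[of "(a, \<Omega>)"]] assms by simp
  moreover have "up_mass (a, \<Omega>) = 1/2"
    using half assms by (simp add: fiber_eq)
  ultimately show ?thesis
    by simp
qed

lemma down_mass_tendsto_half:
  assumes "b < \<Omega>"
  shows "((\<lambda>y. down_mass (y, b)) \<longlongrightarrow> 1/2) (at_left \<Omega>)"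
proof -
  have "((\<lambda>y. (y, b)) \<longlongrightarrow> (\<Omega>, b)) (at_left \<Omega>)"
    by (intro tendsto_intros)
  then have "((\<lambda>y. down_mass (y, b)) \<longlongrightarrow> down_mass (\<Omega>, b)) (at_left \<Omega>)"
    using isCont_tendsto_compose[OF isCont_down_mass[of "(\<Omega>, b)"]] assms by simp
  moreover have "down_mass (\<Omega>, b) = 1/2"
    using half assms by (simp add: fiber_eq)
  ultimately show ?thesis
    by simp
qed

lemma half_mass_zigzag:
  obtains \<alpha> :: "nat \<Rightarrow> 'a"
  where "\<And>n. \<alpha> n < \<Omega>" "incseq \<alpha>"
    and "\<And>n. \<bar>up_mass (\<alpha> n, \<alpha> (Suc n)) - 1/2\<bar> < 1 / real (Suc n)"
    and "\<And>n. \<bar>down_mass (\<alpha> (Suc n), \<alpha> n) - 1/2\<bar> < 1 / real (Suc n)"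
proof -
  define good where "good n a y \<longleftrightarrow> a < y \<and> y < \<Omega> \<and>
      \<bar>up_mass (a, y) - 1/2\<bar> < 1 / real (Suc n) \<and> \<bar>down_mass (y, a) - 1/2\<bar> < 1 / real (Suc n)" for n a y
  have "\<exists>y. good n a y" if "a < \<Omega>" for n a
  proof -
    have "\<forall>\<^sub>F y in at_left \<Omega>. \<bar>up_mass (a, y) - 1/2\<bar> < 1 / real (Suc n) \<and> \<bar>down_mass (y, a) - 1/2\<bar> < 1 / real (Suc n)"
      using up_mass_tendsto_half[OF that] down_mass_tendsto_half[OF that]
      unfolding tendsto_iff dist_real_def by (simp add: eventually_conj)
    then show ?thesis
      using exists_above_at_left_Omega[OF that] unfolding good_def by blast
  qed
  then have good_next: "good n a (SOME y. good n a y)" if "a < \<Omega>" for n a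
    using that someI_ex by metis
  obtain a0 where "a0 < \<Omega>"
    using exists_less_Omega by blast
  define \<alpha> where "\<alpha> = rec_nat a0 (\<lambda>n a. SOME y. good n a y)"
  have \<alpha>_Suc: "\<alpha> (Suc n) = (SOME y. good n (\<alpha> n) y)" for n
    by (simp add: \<alpha>_def)
  have \<alpha>_less: "\<alpha> n < \<Omega>" for n
    by (induction n) (use \<open>a0 < \<Omega>\<close> good_next in \<open>auto simp: \<alpha>_def good_def\<close>)
  have good: "good n (\<alpha> n) (\<alpha> (Suc n))" for n
    unfolding \<alpha>_Suc using good_next[OF \<alpha>_less] .
  then have "incseq \<alpha>"
    by (intro incseq_SucI) (simp add: good_def less_imp_le)
  with \<alpha>_less good show ?thesis
    unfolding good_def by (intro that) auto
qed

lemma no_positive_extension: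
  assumes "prob_family (Ytop \<Omega>) Xtop proj \<mu>"
    and pos: "\<forall>x\<in>{..<\<Omega>} \<times> {..<\<Omega>}. \<forall>y\<in>fiber (Ytop \<Omega>) proj x. \<mu> x y > 0"
  shows False
proof -
  obtain \<alpha> where \<alpha>: "\<And>n. \<alpha> n < \<Omega>" "incseq \<alpha>"
    and up: "\<And>n. \<bar>up_mass (\<alpha> n, \<alpha> (Suc n)) - 1/2\<bar> < 1 / real (Suc n)"
    and down: "\<And>n. \<bar>down_mass (\<alpha> (Suc n), \<alpha> n) - 1/2\<bar> < 1 / real (Suc n)"
    using half_mass_zigzag by blast
  obtain d where "d < \<Omega>" "\<alpha> \<longlonglongrightarrow> d"
    using incseq_converges_below_Omega \<alpha> by blast
  moreover have "(\<lambda>n. \<alpha> (Suc n)) \<longlonglongrightarrow> d"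
    using \<open>\<alpha> \<longlonglongrightarrow> d\<close> LIMSEQ_Suc by blast
  ultimately have "(\<lambda>n. (\<alpha> n, \<alpha> (Suc n))) \<longlonglongrightarrow> (d, d)" "(\<lambda>n. (\<alpha> (Suc n), \<alpha> n)) \<longlonglongrightarrow> (d, d)"
    by (auto intro: tendsto_Pair)
  then have "up_mass (d, d) = 1/2" "down_mass (d, d) = 1/2"
    using isCont_eq_if_approximated[OF isCont_up_mass _ up] isCont_eq_if_approximated[OF isCont_down_mass _ down]
      \<open>d < \<Omega>\<close> by simp_all
  moreover have "\<mu> (d, d) (cls ((d, d), Dot)) > 0"
    using pos \<open>d < \<Omega>\<close> by (simp add: fiber_eq)
  ultimately show False
    using prob_family_mass_sum_interior[OF assms(1), of "(d, d)"] \<open>d < \<Omega>\<close> by simp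
qed

end
end

end

theorem mainTheorem6:
  fixes \<Omega> :: "'a::{wellorder,linorder_topology}"
  assumes "is_first_uncountable_top \<Omega>"
  defines "X2 \<equiv> ({\<Omega>} \<times> {x. x < \<Omega>}) \<union> ({x. x < \<Omega>} \<times> {\<Omega>})"
      and "X3 \<equiv> {x. x < \<Omega>} \<times> {x. x < \<Omega>}"
  shows "branched_cover (Ytop \<Omega>) Xtop proj
    \<and> card (fiber (Ytop \<Omega>) proj (\<Omega>, \<Omega>)) = 1
    \<and> (\<forall>x\<in>X2. card (fiber (Ytop \<Omega>) proj x) = 2)
    \<and> (\<forall>x\<in>X3. card (fiber (Ytop \<Omega>) proj x) = 3)
    \<and> normal_space (subtopology Xtop {(\<Omega>, \<Omega>)})
    \<and> normal_space (subtopology Xtop X2)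
    \<and> normal_space (subtopology Xtop X3)
    \<and> \<not> (\<exists>\<mu>. prob_family (Ytop \<Omega>) Xtop proj \<mu>
            \<and> weak_star_continuous (Ytop \<Omega>) Xtop proj \<mu>
            \<and> (\<forall>x\<in>X2. \<forall>y\<in>fiber (Ytop \<Omega>) proj x. \<mu> x y = 1/2)
            \<and> (\<forall>y\<in>fiber (Ytop \<Omega>) proj (\<Omega>, \<Omega>). \<mu> (\<Omega>, \<Omega>) y = 1)
            \<and> (\<forall>x\<in>X3. \<forall>y\<in>fiber (Ytop \<Omega>) proj x. \<mu> x y > 0))"
proof -
  interpret first_uncountable \<Omega>
    by unfold_locales (fact assms)
  have X2: "X2 = {\<Omega>} \<times> {..<\<Omega>} \<union> {..<\<Omega>} \<times> {\<Omega>}" and X3: "X3 = {..<\<Omega>} \<times> {..<\<Omega>}"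
    by (simp_all add: X2_def X3_def lessThan_def)
  have "subtopology Xtop {(\<Omega>, \<Omega>)} = discrete_topology {(\<Omega>, \<Omega>)}"
    by (simp add: Xtop_eq_euclidean subtopology_eq_discrete_topology_sing)
  then have "normal_space (subtopology Xtop {(\<Omega>, \<Omega>)})"
    by (simp add: normal_space_discrete_topology)
  moreover have "normal_space (subtopology Xtop X2)" "normal_space (subtopology Xtop X3)"
    using normal_space_boundary_stratum normal_space_below_Omega_square
    by (simp_all add: X2 X3 Xtop_eq_euclidean)
  moreover have "\<forall>x\<in>X2. card (fiber (Ytop \<Omega>) proj x) = 2" "\<forall>x\<in>X3. card (fiber (Ytop \<Omega>) proj x) = 3"
    using card_fiber_boundary card_fiber_interior by (simp_all add: X2 X3)
  moreover have "\<not> (\<exists>\<mu>. prob_family (Ytop \<Omega>) Xtop proj \<mu>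
            \<and> weak_star_continuous (Ytop \<Omega>) Xtop proj \<mu>
            \<and> (\<forall>x\<in>X2. \<forall>y\<in>fiber (Ytop \<Omega>) proj x. \<mu> x y = 1/2)
            \<and> (\<forall>y\<in>fiber (Ytop \<Omega>) proj (\<Omega>, \<Omega>). \<mu> (\<Omega>, \<Omega>) y = 1)
            \<and> (\<forall>x\<in>X3. \<forall>y\<in>fiber (Ytop \<Omega>) proj x. \<mu> x y > 0))"
    using no_positive_extension unfolding X2 X3 by blast
  ultimately show ?thesis
    using branched_cover card_fiber_corner by blast
qed

end
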